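(* Let $m,n,k$ be positive integers with $(m,k-1)=1$ and $n=\mathrm{ind}_m(k)$, and let $G=G(m,n,k)=\langle a,b;\ a^m=1,\ b^n=1,\ b^{-1}ab=a^k\rangle$. For every $g\in G$, $\rho(g)$ and $\lambda(g)$ are mu-maps; specifically, for $r\in\mathbb{Z}_m$, $s\in\mathbb{Z}_n$, $\rho(a^rb^s)=\mu(k_s,rk^s)$ and $\lambda(a^rb^s)=\mu(-k_s,-rk^s)$.
   Context: $\mathrm{ind}_m(k)$ is the least positive integer $d$ with $k^d\equiv1\pmod m$; $k_t=k^t-1\pmod m$. Elements of $G$ are written uniquely as $a^ib^j$, $i\in\mathbb{Z}_m$, $j\in\mathbb{Z}_n$. Commutators are $[x,y]=x^{-1}y^{-1}xy$; $(x)\rho(g)=[x,g]$ and $(x)\lambda(g)=[g,x]$ (maps written on the right). For $x,y\in\mathbb{Z}_m$, the mu-map $\mu(x,y):G\to G$ is $(a^ib^j)\mu(x,y)=a^N$ with $N=xik^j-yk_j\pmod m$. *)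

theory Defs
  imports "HOL-Algebra.Group" "HOL-Number_Theory.Number_Theory"
begin

text \<open>ind_m(k) is the multiplicative order, i.e. the library's ord m k.\<close>

definition kt :: "nat \<Rightarrow> nat \<Rightarrow> nat \<Rightarrow> int" where
  "kt m k t = (int k ^ t - 1) mod int m"

definition comm :: "('g, 'c) monoid_scheme \<Rightarrow> 'g \<Rightarrow> 'g \<Rightarrow> 'g" where
  "comm G x y = inv\<^bsub>G\<^esub> x \<otimes>\<^bsub>G\<^esub> inv\<^bsub>G\<^esub> y \<otimes>\<^bsub>G\<^esub> x \<otimes>\<^bsub>G\<^esub> y"

definition rho :: "('g, 'c) monoid_scheme \<Rightarrow> 'g \<Rightarrow> 'g \<Rightarrow> 'g" where
  "rho G g x = comm G x g"

definition lam :: "('g, 'c) monoid_scheme \<Rightarrow> 'g \<Rightarrow> 'g \<Rightarrow> 'g" where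
  "lam G g x = comm G g x"

definition normal_ij :: "('g, 'c) monoid_scheme \<Rightarrow> 'g \<Rightarrow> 'g \<Rightarrow> nat \<Rightarrow> nat \<Rightarrow> 'g \<Rightarrow> nat \<times> nat" where
  "normal_ij G a b m n x =
     (THE p. fst p < m \<and> snd p < n \<and> x = a [^]\<^bsub>G\<^esub> fst p \<otimes>\<^bsub>G\<^esub> b [^]\<^bsub>G\<^esub> snd p)"

text \<open>mu-map mu(x,y): a^i b^j \<mapsto> a^N, N = x i k^j - y k_j (mod m); x, y \<in> Z_m given by integer representatives.\<close>
definition mu_map :: "('g, 'c) monoid_scheme \<Rightarrow> 'g \<Rightarrow> 'g \<Rightarrow> nat \<Rightarrow> nat \<Rightarrow> nat \<Rightarrow> int \<Rightarrow> int \<Rightarrow> 'g \<Rightarrow> 'g" where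
  "mu_map G a b m n k x y g =
     (case normal_ij G a b m n g of (i, j) \<Rightarrow>
        a [^]\<^bsub>G\<^esub> nat ((x * int i * int k ^ j - y * kt m k j) mod int m))"

end

theory Submission
  imports Defs "HOL-Algebra.Multiplicative_Group"
begin

(* Conjugation by b^j acts on the cyclic subgroup <a> as z |-> z k^j. Pushing the powers of b
   past the powers of a gives the commutator of normal forms in closed form,
     [a^i b^j, a^r b^s] = a^E,   E = (k^s - 1) i k^j - r k^s (k^j - 1),
   which is exactly the mu-map exponent for x = k_s, y = r k^s once k_s is read modulo m
   (a^m = 1). The lambda case follows from [g, x] = [x, g]^-1. *)

lemma kt_cong: "[kt m k t = int k ^ t - 1] (mod int m)"
  by (simp add: kt_def cong_def)

context group
begin

lemma conjugation_hom:
  assumes c: "c \<in> carrier G"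
  shows "(\<lambda>x. inv c \<otimes> x \<otimes> c) \<in> hom G G"
proof (rule homI)
  fix x y assume "x \<in> carrier G" "y \<in> carrier G"
  moreover have "c \<otimes> (inv c \<otimes> (y \<otimes> c)) = y \<otimes> c" if "y \<in> carrier G" for y
    using c that by (simp add: m_assoc[symmetric])
  ultimately show "inv c \<otimes> (x \<otimes> y) \<otimes> c = inv c \<otimes> x \<otimes> c \<otimes> (inv c \<otimes> y \<otimes> c)"
    using c by (simp add: m_assoc)
qed (use c in simp)

lemma conjugation_int_pow:
  assumes "c \<in> carrier G" "x \<in> carrier G"
  shows "inv c \<otimes> x [^] (z::int) \<otimes> c = (inv c \<otimes> x \<otimes> c) [^] z"
  using hom_int_pow[OF conjugation_hom[OF assms(1)] assms(2) is_group is_group] by simp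

lemma int_pow_eq_if_cong:
  assumes a: "a \<in> carrier G" and am: "a [^] (m::nat) = \<one>" and zw: "[z = w] (mod int m)"
  shows "a [^] (z::int) = a [^] w"
proof -
  have "int (ord a) dvd int m" using am a by (simp add: pow_eq_id)
  also have "int m dvd w - z" using zw by (simp add: cong_iff_dvd_diff dvd_diff_commute)
  finally show ?thesis using a by (simp add: int_pow_eq)
qed

lemma comm_swap_eq_inv:
  assumes "x \<in> carrier G" "y \<in> carrier G"
  shows "comm G y x = inv (comm G x y)"
  using assms by (simp add: comm_def inv_mult_group m_assoc)

context
  fixes a b :: 'a and k :: nat
  assumes a: "a \<in> carrier G" and b: "b \<in> carrier G"
    and rel: "inv b \<otimes> a \<otimes> b = a [^] k"
begin

lemma conj_int_pow_by_pow: "inv (b [^] (j::nat)) \<otimes> a [^] (z::int) \<otimes> b [^] j = a [^] (z * int k ^ j)"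
proof (induction j arbitrary: z)
  case 0
  then show ?case using a by simp
next
  case (Suc j)
  have "inv (b [^] Suc j) \<otimes> a [^] z \<otimes> b [^] Suc j
      = inv b \<otimes> (inv (b [^] j) \<otimes> a [^] z \<otimes> b [^] j) \<otimes> b"
    using a b by (simp add: inv_mult_group m_assoc)
  also have "\<dots> = (a [^] k) [^] (z * int k ^ j)"
    using Suc conjugation_int_pow[OF b a] rel by simp
  also have "\<dots> = a [^] (z * int k ^ Suc j)"
    using a by (simp add: int_pow_int[symmetric] int_pow_pow mult_ac)
  finally show ?case .
qed

lemma int_pow_mult_pow_swap: "a [^] (z::int) \<otimes> b [^] (j::nat) = b [^] j \<otimes> a [^] (z * int k ^ j)"
  using a b by (simp add: conj_int_pow_by_pow[symmetric] m_assoc[symmetric])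

lemma comm_normal_forms:
  "comm G (a [^] (i::int) \<otimes> b [^] (j::nat)) (a [^] (r::int) \<otimes> b [^] (s::nat))
     = a [^] ((int k ^ s - 1) * i * int k ^ j - r * int k ^ s * (int k ^ j - 1))"
proof -
  define x where "x = a [^] i \<otimes> b [^] j"
  define g where "g = a [^] r \<otimes> b [^] s"
  define w where "w = (i - r) * int k ^ j + r"
  have x: "x \<in> carrier G" using a b by (simp add: x_def)
  have conj_x_by_a: "a [^] (- r) \<otimes> x \<otimes> a [^] r = b [^] j \<otimes> a [^] w"
  proof -
    have "a [^] (- r) \<otimes> x \<otimes> a [^] r = a [^] (i - r) \<otimes> b [^] j \<otimes> a [^] r"
      using a b int_pow_mult[OF a, of "- r" i] by (simp add: x_def m_assoc[symmetric])
    also have "\<dots> = b [^] j \<otimes> (a [^] ((i - r) * int k ^ j) \<otimes> a [^] r)"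
      using a b by (simp add: int_pow_mult_pow_swap m_assoc)
    finally show ?thesis using a by (simp add: int_pow_mult w_def)
  qed
  have "inv g \<otimes> x \<otimes> g = inv (b [^] s) \<otimes> (a [^] (- r) \<otimes> x \<otimes> a [^] r) \<otimes> b [^] s"
    using a b x by (simp add: g_def inv_mult_group int_pow_neg m_assoc)
  also have "\<dots> = inv (b [^] s) \<otimes> (b [^] j \<otimes> a [^] w) \<otimes> b [^] s"
    by (simp only: conj_x_by_a)
  also have "\<dots> = b [^] j \<otimes> (inv (b [^] s) \<otimes> a [^] w \<otimes> b [^] s)"
  proof -
    have "inv (b [^] s) \<otimes> b [^] j = b [^] j \<otimes> inv (b [^] s)"
      using b int_pow_mult[OF b, of "- int s" "int j"] int_pow_mult[OF b, of "int j" "- int s"]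
      by (simp add: int_pow_int int_pow_neg add.commute)
    then show ?thesis using a b by (simp add: m_assoc[symmetric])
  qed
  finally have conj_x: "inv g \<otimes> x \<otimes> g = b [^] j \<otimes> a [^] (w * int k ^ s)"
    by (simp add: conj_int_pow_by_pow)
  have "comm G x g = inv (b [^] j) \<otimes> a [^] (- i) \<otimes> b [^] j \<otimes> a [^] (w * int k ^ s)"
    using a b conj_x by (simp add: comm_def x_def g_def inv_mult_group int_pow_neg m_assoc)
  also have "\<dots> = a [^] (- i * int k ^ j) \<otimes> a [^] (w * int k ^ s)"
    using a by (simp add: conj_int_pow_by_pow)
  also have "\<dots> = a [^] (- i * int k ^ j + w * int k ^ s)"
    by (rule int_pow_mult[OF a, symmetric])
  finally show ?thesis
    unfolding x_def g_def w_def by (simp add: algebra_simps)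
qed

end

lemma normal_ij_normal_form:
  assumes bij: "bij_betw (\<lambda>(i, j). a [^] (i::nat) \<otimes> b [^] (j::nat)) ({..<m} \<times> {..<n}) (carrier G)"
    and ij: "i < m" "j < n"
  shows "normal_ij G a b m n (a [^] i \<otimes> b [^] j) = (i, j)"
  unfolding normal_ij_def
proof (rule the_equality)
  fix p assume "fst p < m \<and> snd p < n \<and> a [^] i \<otimes> b [^] j = a [^] fst p \<otimes> b [^] snd p"
  then show "p = (i, j)"
    using inj_onD[OF bij_betw_imp_inj_on[OF bij], of p "(i, j)"] ij by (cases p) auto
qed (use ij in simp)

lemma mu_map_normal_form:
  assumes a: "a \<in> carrier G" and am: "a [^] m = \<one>"
    and bij: "bij_betw (\<lambda>(i, j). a [^] (i::nat) \<otimes> b [^] (j::nat)) ({..<m} \<times> {..<n}) (carrier G)"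
    and ij: "i < m" "j < n"
  shows "mu_map G a b m n k X Y (a [^] i \<otimes> b [^] j) = a [^] (X * int i * int k ^ j - Y * kt m k j)"
proof -
  have "mu_map G a b m n k X Y (a [^] i \<otimes> b [^] j)
      = a [^] ((X * int i * int k ^ j - Y * kt m k j) mod int m)"
    using ij by (simp add: mu_map_def normal_ij_normal_form[OF bij ij] pow_nat)
  also have "\<dots> = a [^] (X * int i * int k ^ j - Y * kt m k j)"
    by (rule int_pow_eq_if_cong[OF a am]) (simp add: cong_def)
  finally show ?thesis .
qed

lemma rho_lam_normal_form_eq_mu_map:
  assumes a: "a \<in> carrier G" and b: "b \<in> carrier G" and am: "a [^] m = \<one>"
    and rel: "inv b \<otimes> a \<otimes> b = a [^] k"
    and bij: "bij_betw (\<lambda>(i, j). a [^] (i::nat) \<otimes> b [^] (j::nat)) ({..<m} \<times> {..<n}) (carrier G)"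
    and x: "x \<in> carrier G"
  shows "rho G (a [^] r \<otimes> b [^] s) x = mu_map G a b m n k (kt m k s) (int r * int k ^ s) x"
    and "lam G (a [^] r \<otimes> b [^] s) x = mu_map G a b m n k (- kt m k s) (- (int r * int k ^ s)) x"
proof -
  obtain i j where ij: "i < m" "j < n" and x_eq: "x = a [^] i \<otimes> b [^] j"
    using bij_betw_imp_surj_on[OF bij] x by force
  define g where "g = a [^] r \<otimes> b [^] s"
  define E where "E = (int k ^ s - 1) * int i * int k ^ j - int r * int k ^ s * (int k ^ j - 1)"
  have comm_xg: "comm G x g = a [^] E"
    using comm_normal_forms[OF a b rel, of "int i" j "int r" s]
    by (simp add: x_eq g_def E_def int_pow_int)
  have mu_x: "mu_map G a b m n k X Y x = a [^] (X * int i * int k ^ j - Y * kt m k j)" for X Y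
    unfolding x_eq by (rule mu_map_normal_form[OF a am bij ij])
  have E_cong: "[kt m k s * int i * int k ^ j - int r * int k ^ s * kt m k j = E] (mod int m)"
    unfolding E_def by (intro cong_diff cong_mult cong_refl kt_cong)
  show "rho G g x = mu_map G a b m n k (kt m k s) (int r * int k ^ s) x"
    by (simp add: rho_def comm_xg mu_x int_pow_eq_if_cong[OF a am E_cong])
  have "lam G g x = a [^] (- E)"
    using a b x by (simp add: lam_def g_def comm_swap_eq_inv comm_xg[unfolded g_def] int_pow_neg)
  then show "lam G g x = mu_map G a b m n k (- kt m k s) (- (int r * int k ^ s)) x"
    using int_pow_eq_if_cong[OF a am cong_minus_minus_iff[THEN iffD2, OF E_cong]]
    by (simp add: mu_x)
qed

end

theorem lemma3p2:
  fixes G :: "('g, 'c) monoid_scheme" and m n k :: nat and a b :: 'g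
  assumes "0 < m" and "0 < n" and "0 < k"
    and "coprime m (k - 1)"
    and "n = ord m k"
    and "group G"
    and "a \<in> carrier G" and "b \<in> carrier G"
    and "a [^]\<^bsub>G\<^esub> m = \<one>\<^bsub>G\<^esub>" and "b [^]\<^bsub>G\<^esub> n = \<one>\<^bsub>G\<^esub>"
    and "inv\<^bsub>G\<^esub> b \<otimes>\<^bsub>G\<^esub> a \<otimes>\<^bsub>G\<^esub> b = a [^]\<^bsub>G\<^esub> k"
    and "bij_betw (\<lambda>(i, j). a [^]\<^bsub>G\<^esub> (i::nat) \<otimes>\<^bsub>G\<^esub> b [^]\<^bsub>G\<^esub> (j::nat))
           ({..<m} \<times> {..<n}) (carrier G)"
  shows "\<forall>r<m. \<forall>s<n. \<forall>x\<in>carrier G.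
           rho G (a [^]\<^bsub>G\<^esub> r \<otimes>\<^bsub>G\<^esub> b [^]\<^bsub>G\<^esub> s) x
             = mu_map G a b m n k (kt m k s) (int r * int k ^ s) x
         \<and> lam G (a [^]\<^bsub>G\<^esub> r \<otimes>\<^bsub>G\<^esub> b [^]\<^bsub>G\<^esub> s) x
             = mu_map G a b m n k (- kt m k s) (- (int r * int k ^ s)) x"
  using group.rho_lam_normal_form_eq_mu_map[OF \<open>group G\<close> \<open>a \<in> carrier G\<close> \<open>b \<in> carrier G\<close>
      \<open>a [^]\<^bsub>G\<^esub> m = \<one>\<^bsub>G\<^esub>\<close> \<open>inv\<^bsub>G\<^esub> b \<otimes>\<^bsub>G\<^esub> a \<otimes>\<^bsub>G\<^esub> b = a [^]\<^bsub>G\<^esub> k\<close> \<open>bij_betw _ _ _\<close>]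
  by blast

end
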